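(* Let $r\ge1$ and let $\lambda=(\lambda_1,\dots,\lambda_{r+1})\in\mathbb{Z}^{r+1}$ be such that $\lambda+\rho$ is a partition. For $m\in\mathrm{Lu}(\lambda+\rho)$ define $f(m)=(a_{i,j})_{1\le i<j\le r+1}$ recursively by $a_{i,r+2}=(\lambda+\rho)_i=\lambda_i+r+1-i$ and $a_{i,j}=a_{i,j+1}-m_{i,j}$. Then $f$ is a bijection $\mathrm{Lu}(\lambda+\rho)\to\mathrm{GT}(\lambda+\rho)$, with inverse $T=(a_{i,j})\mapsto(m_{i,j})$, $m_{i,j}=a_{i,j+1}-a_{i,j}$, and it is weight-preserving: $z^{f(m)}=z^m$.
   Context: Positive roots of $\mathrm{GL}_{r+1}$ are indexed by pairs $(i,j)$ with $1\le i<j\le r+1$; $N=r(r+1)/2$; $\mathbb{N}=\mathbb{Z}_{\ge0}$; $\rho=(r,r-1,\dots,1,0)$. For $\lambda\in\mathbb{Z}^{r+1}$ put $\Lambda_i=\lambda_i-\lambda_{i+1}$. For $m=(m_{i,j})_{1\le i<j\le r+1}\in\mathbb{N}^N$ define \[ s_{i,j}=\Lambda_i+\sum_{k=j}^{r}m_{i+1,k+1}-\sum_{k=j}^{r+1}m_{i,k}. \] The set of Lusztig data $\mathrm{Lu}(\lambda+\rho)$ is the set of $m\in\mathbb{N}^N$ with $s_{i,j}\ge-1$ for all $1\le i<j\le r+1$. For a partition $\mu=(\mu_1\ge\dots\ge\mu_{r+1}\ge0)$, $\mathrm{GT}(\mu)$ (Gelfand–Tsetlin patterns with top row $\mu$)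 is the set of $(a_{i,j})_{1\le i<j\le r+1}\in\mathbb{N}^N$ such that $a_{i,j+1}\ge a_{i,j}\ge a_{i+1,j+1}$ for all $1\le i<j\le r+1$, where $a_{i,r+2}:=\mu_i$. For formal variables $z_1,\dots,z_{r+1}$ the weights are $z^m=\prod_{i<j}(z_i/z_j)^{m_{i,j}}$ and $z^T=\prod_{i<j}(z_i/z_j)^{a_{i,j+1}-a_{i,j}}$ for $T=(a_{i,j})$. *)

theory Defs
  imports Complex_Main
begin

definition PosRoots :: "nat \<Rightarrow> (nat \<times> nat) set" where
  "PosRoots r = {(i,j). 1 \<le> i \<and> i < j \<and> j \<le> r + 1}"

definition lamrho :: "nat \<Rightarrow> (nat \<Rightarrow> int) \<Rightarrow> nat \<Rightarrow> int" where
  "lamrho r lam i = lam i + int r + 1 - int i"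

definition is_partition :: "nat \<Rightarrow> (nat \<Rightarrow> int) \<Rightarrow> bool" where
  "is_partition r mu \<longleftrightarrow> (\<forall>i. 1 \<le> i \<and> i \<le> r \<longrightarrow> mu (i+1) \<le> mu i) \<and> 0 \<le> mu (r+1)"

(* elements of N^N: functions on PosRoots r, nonnegative, extended by 0 outside *)
definition NN :: "nat \<Rightarrow> ((nat \<times> nat) \<Rightarrow> int) set" where
  "NN r = {m. (\<forall>p\<in>PosRoots r. 0 \<le> m p) \<and> (\<forall>p. p \<notin> PosRoots r \<longrightarrow> m p = 0)}"

definition Lam :: "(nat \<Rightarrow> int) \<Rightarrow> nat \<Rightarrow> int" where
  "Lam lam i = lam i - lam (i+1)"

definition s_ij :: "nat \<Rightarrow> (nat \<Rightarrow> int) \<Rightarrow> ((nat \<times> nat) \<Rightarrow> int) \<Rightarrow> nat \<Rightarrow> nat \<Rightarrow> int" where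
  "s_ij r lam m i j = Lam lam i + (\<Sum>k\<in>{j..r}. m (i+1, k+1)) - (\<Sum>k\<in>{j..r+1}. m (i, k))"

definition Lu :: "nat \<Rightarrow> (nat \<Rightarrow> int) \<Rightarrow> ((nat \<times> nat) \<Rightarrow> int) set" where
  "Lu r lam = {m \<in> NN r. \<forall>(i,j)\<in>PosRoots r. s_ij r lam m i j \<ge> -1}"

definition extGT :: "nat \<Rightarrow> (nat \<Rightarrow> int) \<Rightarrow> ((nat \<times> nat) \<Rightarrow> int) \<Rightarrow> nat \<Rightarrow> nat \<Rightarrow> int" where
  "extGT r mu a i j = (if j = r + 2 then mu i else a (i, j))"

definition GT :: "nat \<Rightarrow> (nat \<Rightarrow> int) \<Rightarrow> ((nat \<times> nat) \<Rightarrow> int) set" where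
  "GT r mu = {a \<in> NN r. \<forall>(i,j)\<in>PosRoots r.
      extGT r mu a i (j+1) \<ge> a (i,j) \<and> a (i,j) \<ge> extGT r mu a (i+1) (j+1)}"

(* f(m): a_{i,r+2} = mu_i, a_{i,j} = a_{i,j+1} - m_{i,j}; unrolled recursion:
   a_{i,j} = mu_i - sum_{k=j}^{r+1} m_{i,k} *)
definition fLuGT :: "nat \<Rightarrow> (nat \<Rightarrow> int) \<Rightarrow> ((nat \<times> nat) \<Rightarrow> int) \<Rightarrow> (nat \<times> nat) \<Rightarrow> int" where
  "fLuGT r lam m = (\<lambda>(i,j). if (i,j) \<in> PosRoots r
       then lamrho r lam i - (\<Sum>k\<in>{j..r+1}. m (i,k)) else 0)"

definition gGTLu :: "nat \<Rightarrow> (nat \<Rightarrow> int) \<Rightarrow> ((nat \<times> nat) \<Rightarrow> int) \<Rightarrow> (nat \<times> nat) \<Rightarrow> int" where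
  "gGTLu r lam a = (\<lambda>(i,j). if (i,j) \<in> PosRoots r
       then extGT r (lamrho r lam) a i (j+1) - a (i,j) else 0)"

(* weights, evaluated at z_1,...,z_{r+1} (nonzero elements of a field) *)
definition wtLu :: "nat \<Rightarrow> ((nat \<times> nat) \<Rightarrow> int) \<Rightarrow> (nat \<Rightarrow> 'a::field) \<Rightarrow> 'a" where
  "wtLu r m z = (\<Prod>(i,j)\<in>PosRoots r. (z i / z j) powi m (i,j))"

definition wtGT :: "nat \<Rightarrow> (nat \<Rightarrow> int) \<Rightarrow> ((nat \<times> nat) \<Rightarrow> int) \<Rightarrow> (nat \<Rightarrow> 'a::field) \<Rightarrow> 'a" where
  "wtGT r mu a z = (\<Prod>(i,j)\<in>PosRoots r. (z i / z j) powi (extGT r mu a i (j+1) - a (i,j)))"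

end

theory Submission
  imports Defs
begin

text \<open>
  For \<open>a = f(m)\<close> the entries \<open>a(i,j) = \<mu>(i) - (\<Sum>k\<ge>j. m(i,k))\<close> have the \<open>m(i,j)\<close> as
  consecutive row differences, so \<open>f\<close> and \<open>g\<close> are mutually inverse by telescoping, the
  upper interlacing inequality \<open>a(i,j) \<le> a(i,j+1)\<close> is \<open>m(i,j) \<ge> 0\<close>, and the weights agree
  factor by factor. Comparing rows \<open>i\<close> and \<open>i+1\<close> gives \<open>a(i,j) - a(i+1,j+1) = s(i,j) + 1\<close>,
  so the lower interlacing inequality is exactly the Lusztig condition \<open>s(i,j) \<ge> -1\<close>.
  The entries of such a pattern are nonnegative because the chain
  \<open>a(i,j) \<ge> a(i+1,j+1) \<ge> \<dots>\<close> ends in the top row, which is a partition.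
\<close>

lemma fLuGT_PosRoots:
  "(i, j) \<in> PosRoots r \<Longrightarrow> fLuGT r lam m (i, j) = lamrho r lam i - (\<Sum>k\<in>{j..r+1}. m (i, k))"
  by (simp add: fLuGT_def)

lemma PosRoots_iff: "(i, j) \<in> PosRoots r \<longleftrightarrow> 1 \<le> i \<and> i < j \<and> j \<le> r + 1"
  by (simp add: PosRoots_def)

lemma extGT_fLuGT_diff:
  assumes "(i, j) \<in> PosRoots r"
  shows "extGT r (lamrho r lam) (fLuGT r lam m) i (j+1) - fLuGT r lam m (i, j) = m (i, j)"
proof (cases "j = r + 1")
  case True
  then show ?thesis using assms by (simp add: extGT_def fLuGT_PosRoots)
next
  case False
  then have "(i, j+1) \<in> PosRoots r" "j \<le> r" using assms by (auto simp: PosRoots_iff)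
  moreover have "(\<Sum>k\<in>{j..r+1}. m (i, k)) = m (i, j) + (\<Sum>k\<in>{Suc j..r+1}. m (i, k))"
    using \<open>j \<le> r\<close> by (subst sum.atLeast_Suc_atMost) auto
  ultimately show ?thesis using assms False by (simp add: extGT_def fLuGT_PosRoots)
qed

lemma fLuGT_minus_extGT_eq_s_ij:
  assumes "(i, j) \<in> PosRoots r"
  shows "fLuGT r lam m (i, j) - extGT r (lamrho r lam) (fLuGT r lam m) (i+1) (j+1)
    = s_ij r lam m i j + 1"
proof (cases "j = r + 1")
  case True
  then show ?thesis using assms
    by (simp add: extGT_def fLuGT_PosRoots s_ij_def lamrho_def Lam_def)
next
  case False
  then have "(i+1, j+1) \<in> PosRoots r" "j \<le> r" using assms by (auto simp: PosRoots_iff)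
  moreover have "(\<Sum>k\<in>{Suc j..Suc r}. m (i+1, k)) = (\<Sum>k\<in>{j..r}. m (i+1, Suc k))"
    by (rule sum.shift_bounds_cl_Suc_ivl)
  ultimately show ?thesis using assms False
    by (simp add: extGT_def fLuGT_PosRoots s_ij_def lamrho_def Lam_def)
qed

lemma sum_extGT_row_diff:
  assumes "j \<le> r + 1"
  shows "(\<Sum>k\<in>{j..r+1}. extGT r mu a i (k+1) - a (i, k)) = mu i - a (i, j)"
  using assms
proof (induction j rule: inc_induct)
  case base
  then show ?case by (simp add: extGT_def)
next
  case (step j)
  then have "(\<Sum>k\<in>{j..r+1}. extGT r mu a i (k+1) - a (i, k))
      = (extGT r mu a i (j+1) - a (i, j)) + (\<Sum>k\<in>{Suc j..r+1}. extGT r mu a i (k+1) - a (i, k))"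
    by (simp add: sum.atLeast_Suc_atMost)
  with step show ?case by (simp add: extGT_def)
qed

lemma gGTLu_fLuGT: "m \<in> NN r \<Longrightarrow> gGTLu r lam (fLuGT r lam m) = m"
  by (rule ext) (auto simp: gGTLu_def NN_def extGT_fLuGT_diff[simplified])

lemma fLuGT_gGTLu: "a \<in> NN r \<Longrightarrow> fLuGT r lam (gGTLu r lam a) = a"
proof (rule ext, clarify)
  fix i j
  assume a: "a \<in> NN r"
  show "fLuGT r lam (gGTLu r lam a) (i, j) = a (i, j)"
  proof (cases "(i, j) \<in> PosRoots r")
    case True
    have "(\<Sum>k\<in>{j..r+1}. gGTLu r lam a (i, k))
        = (\<Sum>k\<in>{j..r+1}. extGT r (lamrho r lam) a i (k+1) - a (i, k))"
      using True by (intro sum.cong) (auto simp: gGTLu_def PosRoots_iff)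
    also have "\<dots> = lamrho r lam i - a (i, j)"
      using True by (intro sum_extGT_row_diff) (simp add: PosRoots_iff)
    finally show ?thesis using True by (simp add: fLuGT_PosRoots)
  qed (use a in \<open>simp add: fLuGT_def NN_def\<close>)
qed

lemma is_partition_nonneg:
  assumes "is_partition r mu" "1 \<le> k" "k \<le> r + 1"
  shows "0 \<le> mu k"
  using assms(3)
proof (induction k rule: inc_induct)
  case base
  then show ?case using assms(1) by (simp add: is_partition_def)
next
  case (step k)
  then have "mu (k+1) \<le> mu k" using assms(1,2) by (simp add: is_partition_def)
  with step show ?case by simp
qed

lemma lower_interlacing_nonneg:
  assumes lower: "\<forall>(i, j)\<in>PosRoots r. extGT r mu a (i+1) (j+1) \<le> a (i, j)"
    and "is_partition r mu" "(i, j) \<in> PosRoots r"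
  shows "0 \<le> a (i, j)"
proof -
  have "j \<le> r + 1" using assms(3) by (simp add: PosRoots_iff)
  then have "\<forall>i. 1 \<le> i \<and> i < j \<longrightarrow> 0 \<le> a (i, j)"
  proof (induction j rule: inc_induct)
    case base
    show ?case
    proof clarify
      fix i assume "1 \<le> i" "i < r + 1"
      then have "(i, r+1) \<in> PosRoots r" by (simp add: PosRoots_iff)
      with lower have "mu (i+1) \<le> a (i, r+1)" by (fastforce simp: extGT_def)
      moreover have "0 \<le> mu (i+1)"
        using is_partition_nonneg[OF \<open>is_partition r mu\<close>] \<open>i < r + 1\<close> by simp
      ultimately show "0 \<le> a (i, r+1)" by simp
    qed
  next
    case (step j)
    show ?case
    proof clarify
      fix i assume "1 \<le> i" "i < j"
      then have "(i, j) \<in> PosRoots r" using step by (simp add: PosRoots_iff)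
      with lower step have "a (i+1, j+1) \<le> a (i, j)" by (fastforce simp: extGT_def)
      moreover have "0 \<le> a (i+1, j+1)" using step \<open>i < j\<close> by simp
      ultimately show "0 \<le> a (i, j)" by simp
    qed
  qed
  then show ?thesis using assms(3) by (simp add: PosRoots_iff)
qed

lemma fLuGT_in_GT:
  assumes "is_partition r (lamrho r lam)" "m \<in> Lu r lam"
  shows "fLuGT r lam m \<in> GT r (lamrho r lam)"
proof -
  let ?a = "fLuGT r lam m"
  have lower: "\<forall>(i, j)\<in>PosRoots r. extGT r (lamrho r lam) ?a (i+1) (j+1) \<le> ?a (i, j)"
    using assms(2) fLuGT_minus_extGT_eq_s_ij[of _ _ r lam m] by (fastforce simp: Lu_def)
  have upper: "\<forall>(i, j)\<in>PosRoots r. ?a (i, j) \<le> extGT r (lamrho r lam) ?a i (j+1)"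
    using assms(2) extGT_fLuGT_diff[of _ _ r lam m] by (fastforce simp: Lu_def NN_def)
  have "?a \<in> NN r"
    using lower_interlacing_nonneg[OF lower assms(1)] by (auto simp: NN_def fLuGT_def)
  with lower upper show ?thesis by (auto simp: GT_def)
qed

lemma gGTLu_in_Lu:
  assumes "a \<in> GT r (lamrho r lam)"
  shows "gGTLu r lam a \<in> Lu r lam"
proof -
  let ?m = "gGTLu r lam a"
  have "a \<in> NN r" using assms by (simp add: GT_def)
  have "?m \<in> NN r" using assms by (auto simp: NN_def GT_def gGTLu_def)
  moreover have "-1 \<le> s_ij r lam ?m i j" if "(i, j) \<in> PosRoots r" for i j
    using fLuGT_minus_extGT_eq_s_ij[OF that, of lam ?m] assms that
    by (auto simp: fLuGT_gGTLu[OF \<open>a \<in> NN r\<close>] GT_def)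
  ultimately show ?thesis by (auto simp: Lu_def)
qed

lemma wtGT_fLuGT: "wtGT r (lamrho r lam) (fLuGT r lam m) z = wtLu r m z"
  unfolding wtGT_def wtLu_def by (intro prod.cong refl) (auto simp: extGT_fLuGT_diff[simplified])

theorem mainTheorem5:
  fixes r :: nat and lam :: "nat \<Rightarrow> int"
  assumes "r \<ge> 1"
    and "is_partition r (lamrho r lam)"
  shows "bij_betw (fLuGT r lam) (Lu r lam) (GT r (lamrho r lam))
    \<and> (\<forall>m\<in>Lu r lam. gGTLu r lam (fLuGT r lam m) = m)
    \<and> (\<forall>T\<in>GT r (lamrho r lam). fLuGT r lam (gGTLu r lam T) = T)
    \<and> (\<forall>m\<in>Lu r lam. \<forall>z :: nat \<Rightarrow> 'a::field.
          (\<forall>i. 1 \<le> i \<and> i \<le> r + 1 \<longrightarrow> z i \<noteq> 0) \<longrightarrow>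
          wtGT r (lamrho r lam) (fLuGT r lam m) z = wtLu r m z)"
proof -
  have gf: "\<forall>m\<in>Lu r lam. gGTLu r lam (fLuGT r lam m) = m"
    by (simp add: Lu_def gGTLu_fLuGT)
  have fg: "\<forall>T\<in>GT r (lamrho r lam). fLuGT r lam (gGTLu r lam T) = T"
    by (simp add: GT_def fLuGT_gGTLu)
  have "bij_betw (fLuGT r lam) (Lu r lam) (GT r (lamrho r lam))"
    using gf fg fLuGT_in_GT[OF assms(2)] gGTLu_in_Lu
    by (intro bij_betw_byWitness[where f' = "gGTLu r lam"]) auto
  with gf fg show ?thesis by (simp add: wtGT_fLuGT)
qed

end
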